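(* Let $K$ be a skew field with center $P$ and an involution, $\mathcal C$ a linear category over $P$ with involution, and $A$ a selfadjoint, direct-sum-indecomposable representation of $\mathcal C$ over $K$. Then $A$ is congruent to a representation $B^f$, where $B\in\operatorname{ind}_0(\mathcal C)$ and $f=f^\circ\in\operatorname{Aut}(B)$.
   Context: $K$ has an involution $a\mapsto\bar a$. Linear category over $P$: $P$-vector-space Hom sets, bilinear composition; involution on it: $u\mapsto u^*$, $(\alpha:u\to v)\mapsto(\alpha^*:v^*\to u^* )$, $u^{**}=u\ne u^*$, $\alpha^{**}=\alpha$, $(\alpha\beta)^*=\beta^*\alpha^*$, $(\alpha a)^*=\alpha^*\bar a$. Representations: functors to finite-dimensional right $K$-spaces, finite total dimension, preserving $P$-linear combinations; morphisms: natural transformations. $V^*$: semilinear forms, $A^*\varphi=\varphi A$, $V^{**}=V$. $A^\circ_u=(A_{u^*})^*$, $A^\circ_\alpha=(A_{\alpha^*})^*$, $f^\circ_u=(f_{u^*})^*$. Selfadjoint: $A=A^\circ$; congruence: isomorphism $\varphi$ of selfadjoint representations with $\varphi^\circ=\varphi^{-1}$. Fix a partition of objects into $S_0$, $S_0^*$. For selfadjoint $B$ and automorphism $f=f^\circ$: $\tilde f_v=f_v$, $\tilde f_{v^*}=1$ ($v\in S_0$), $B^f_v=B_v$, $B^f_\alpha=\tilde f_v^{-1}B_\alpha\tilde f_u$ for $\alpha:u\to v$. $\operatorname{ind}_0(\mathcal C)$: from a complete set of pairwise nonisomorphic indecomposable representations, take those isomorphic to a selfadjoint representation, each replaced by a selfadjoint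 representation isomorphic to it. *)

theory Defs
  imports "Jordan_Normal_Form.Matrix"
begin

definition center :: "'k::division_ring set" where
  "center = {a. \<forall>b. a * b = b * a}"

definition skew_involution :: "('k::division_ring \<Rightarrow> 'k) \<Rightarrow> bool" where
  "skew_involution cj \<longleftrightarrow>
     (\<forall>a. cj (cj a) = a) \<and> (\<forall>a b. cj (a + b) = cj a + cj b) \<and>
     (\<forall>a b. cj (a * b) = cj b * cj a)"

record ('o, 'm, 'k) lcat =
  Dom  :: "'m \<Rightarrow> 'o"
  Cod  :: "'m \<Rightarrow> 'o"
  Comp :: "'m \<Rightarrow> 'm \<Rightarrow> 'm"   (* Comp C \<beta> \<alpha> = \<beta>\<alpha> : first \<alpha>, then \<beta> *)
  Ident :: "'o \<Rightarrow> 'm"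
  Add  :: "'m \<Rightarrow> 'm \<Rightarrow> 'm"
  Zero :: "'o \<Rightarrow> 'o \<Rightarrow> 'm"
  Smul :: "'m \<Rightarrow> 'k \<Rightarrow> 'm"
  ostar :: "'o \<Rightarrow> 'o"
  mstar :: "'m \<Rightarrow> 'm"

definition hom :: "('o, 'm, 'k) lcat \<Rightarrow> 'o \<Rightarrow> 'o \<Rightarrow> 'm set" where
  "hom C u v = {\<alpha>. Dom C \<alpha> = u \<and> Cod C \<alpha> = v}"

definition lin_cat_inv :: "('k::division_ring \<Rightarrow> 'k) \<Rightarrow> ('o, 'm, 'k) lcat \<Rightarrow> bool" where
  "lin_cat_inv cj C \<longleftrightarrow>
    \<comment> \<open>category\<close>
    (\<forall>u. Ident C u \<in> hom C u u) \<and>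
    (\<forall>u v w \<alpha> \<beta>. \<alpha> \<in> hom C u v \<longrightarrow> \<beta> \<in> hom C v w \<longrightarrow> Comp C \<beta> \<alpha> \<in> hom C u w) \<and>
    (\<forall>u v w x \<alpha> \<beta> \<gamma>. \<alpha> \<in> hom C u v \<longrightarrow> \<beta> \<in> hom C v w \<longrightarrow> \<gamma> \<in> hom C w x \<longrightarrow>
        Comp C \<gamma> (Comp C \<beta> \<alpha>) = Comp C (Comp C \<gamma> \<beta>) \<alpha>) \<and>
    (\<forall>u v \<alpha>. \<alpha> \<in> hom C u v \<longrightarrow> Comp C \<alpha> (Ident C u) = \<alpha> \<and> Comp C (Ident C v) \<alpha> = \<alpha>) \<and>
    \<comment> \<open>each Hom set is a P-vector space\<close>
    (\<forall>u v. Zero C u v \<in> hom C u v) \<and>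
    (\<forall>u v \<alpha> \<beta>. \<alpha> \<in> hom C u v \<longrightarrow> \<beta> \<in> hom C u v \<longrightarrow> Add C \<alpha> \<beta> \<in> hom C u v) \<and>
    (\<forall>u v \<alpha> a. \<alpha> \<in> hom C u v \<longrightarrow> a \<in> center \<longrightarrow> Smul C \<alpha> a \<in> hom C u v) \<and>
    (\<forall>u v \<alpha> \<beta> \<gamma>. \<alpha> \<in> hom C u v \<longrightarrow> \<beta> \<in> hom C u v \<longrightarrow> \<gamma> \<in> hom C u v \<longrightarrow>
        Add C (Add C \<alpha> \<beta>) \<gamma> = Add C \<alpha> (Add C \<beta> \<gamma>)) \<and>
    (\<forall>u v \<alpha> \<beta>. \<alpha> \<in> hom C u v \<longrightarrow> \<beta> \<in> hom C u v \<longrightarrow> Add C \<alpha> \<beta> = Add C \<beta> \<alpha>) \<and>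
    (\<forall>u v \<alpha>. \<alpha> \<in> hom C u v \<longrightarrow> Add C \<alpha> (Zero C u v) = \<alpha>) \<and>
    (\<forall>u v \<alpha>. \<alpha> \<in> hom C u v \<longrightarrow> Add C \<alpha> (Smul C \<alpha> (-1)) = Zero C u v) \<and>
    (\<forall>u v \<alpha>. \<alpha> \<in> hom C u v \<longrightarrow> Smul C \<alpha> 1 = \<alpha>) \<and>
    (\<forall>u v \<alpha> a b. \<alpha> \<in> hom C u v \<longrightarrow> a \<in> center \<longrightarrow> b \<in> center \<longrightarrow>
        Smul C (Smul C \<alpha> a) b = Smul C \<alpha> (a * b)) \<and>
    (\<forall>u v \<alpha> \<beta> a. \<alpha> \<in> hom C u v \<longrightarrow> \<beta> \<in> hom C u v \<longrightarrow> a \<in> center \<longrightarrow>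
        Smul C (Add C \<alpha> \<beta>) a = Add C (Smul C \<alpha> a) (Smul C \<beta> a)) \<and>
    (\<forall>u v \<alpha> a b. \<alpha> \<in> hom C u v \<longrightarrow> a \<in> center \<longrightarrow> b \<in> center \<longrightarrow>
        Smul C \<alpha> (a + b) = Add C (Smul C \<alpha> a) (Smul C \<alpha> b)) \<and>
    \<comment> \<open>composition is bilinear\<close>
    (\<forall>u v w \<alpha> \<alpha>' \<beta>. \<alpha> \<in> hom C u v \<longrightarrow> \<alpha>' \<in> hom C u v \<longrightarrow> \<beta> \<in> hom C v w \<longrightarrow>
        Comp C \<beta> (Add C \<alpha> \<alpha>') = Add C (Comp C \<beta> \<alpha>) (Comp C \<beta> \<alpha>')) \<and>
    (\<forall>u v w \<alpha> \<beta> \<beta>'. \<alpha> \<in> hom C u v \<longrightarrow> \<beta> \<in> hom C v w \<longrightarrow> \<beta>' \<in> hom C v w \<longrightarrow>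
        Comp C (Add C \<beta> \<beta>') \<alpha> = Add C (Comp C \<beta> \<alpha>) (Comp C \<beta>' \<alpha>)) \<and>
    (\<forall>u v w \<alpha> \<beta> a. \<alpha> \<in> hom C u v \<longrightarrow> \<beta> \<in> hom C v w \<longrightarrow> a \<in> center \<longrightarrow>
        Comp C \<beta> (Smul C \<alpha> a) = Smul C (Comp C \<beta> \<alpha>) a \<and>
        Comp C (Smul C \<beta> a) \<alpha> = Smul C (Comp C \<beta> \<alpha>) a) \<and>
    \<comment> \<open>involution\<close>
    (\<forall>u. ostar C (ostar C u) = u \<and> ostar C u \<noteq> u) \<and>
    (\<forall>u v \<alpha>. \<alpha> \<in> hom C u v \<longrightarrow> mstar C \<alpha> \<in> hom C (ostar C v) (ostar C u)) \<and>
    (\<forall>\<alpha>. mstar C (mstar C \<alpha>) = \<alpha>) \<and>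
    (\<forall>u v w \<alpha> \<beta>. \<alpha> \<in> hom C u v \<longrightarrow> \<beta> \<in> hom C v w \<longrightarrow>
        mstar C (Comp C \<beta> \<alpha>) = Comp C (mstar C \<alpha>) (mstar C \<beta>)) \<and>
    (\<forall>u v \<alpha> \<beta>. \<alpha> \<in> hom C u v \<longrightarrow> \<beta> \<in> hom C u v \<longrightarrow>
        mstar C (Add C \<alpha> \<beta>) = Add C (mstar C \<alpha>) (mstar C \<beta>)) \<and>
    (\<forall>u v \<alpha> a. \<alpha> \<in> hom C u v \<longrightarrow> a \<in> center \<longrightarrow> mstar C (Smul C \<alpha> a) = Smul C (mstar C \<alpha>) (cj a))"

section \<open>Representations (in coordinates: the space at u is K^(dim u), column vectors,
  K acting on the right; linear maps are matrices acting on the left)\<close>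

record ('o, 'm, 'k) rep =
  rdim :: "'o \<Rightarrow> nat"
  rmap :: "'m \<Rightarrow> 'k mat"

definition is_rep :: "('o, 'm, 'k::division_ring) lcat \<Rightarrow> ('o, 'm, 'k) rep \<Rightarrow> bool" where
  "is_rep C A \<longleftrightarrow>
    finite {u. rdim A u \<noteq> 0} \<and>
    (\<forall>u v \<alpha>. \<alpha> \<in> hom C u v \<longrightarrow> rmap A \<alpha> \<in> carrier_mat (rdim A v) (rdim A u)) \<and>
    (\<forall>u. rmap A (Ident C u) = 1\<^sub>m (rdim A u)) \<and>
    (\<forall>u v w \<alpha> \<beta>. \<alpha> \<in> hom C u v \<longrightarrow> \<beta> \<in> hom C v w \<longrightarrow>
        rmap A (Comp C \<beta> \<alpha>) = rmap A \<beta> * rmap A \<alpha>) \<and>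
    (\<forall>u v \<alpha> \<beta>. \<alpha> \<in> hom C u v \<longrightarrow> \<beta> \<in> hom C u v \<longrightarrow>
        rmap A (Add C \<alpha> \<beta>) = rmap A \<alpha> + rmap A \<beta>) \<and>
    (\<forall>u v \<alpha> a. \<alpha> \<in> hom C u v \<longrightarrow> a \<in> center \<longrightarrow>
        rmap A (Smul C \<alpha> a) = map_mat (\<lambda>x. x * a) (rmap A \<alpha>))"

definition rep_hom :: "('o, 'm, 'k::division_ring) lcat \<Rightarrow> ('o, 'm, 'k) rep \<Rightarrow> ('o, 'm, 'k) rep
    \<Rightarrow> ('o \<Rightarrow> 'k mat) \<Rightarrow> bool" where
  "rep_hom C A B f \<longleftrightarrow>
    (\<forall>u. f u \<in> carrier_mat (rdim B u) (rdim A u)) \<and>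
    (\<forall>u v \<alpha>. \<alpha> \<in> hom C u v \<longrightarrow> rmap B \<alpha> * f u = f v * rmap A \<alpha>)"

definition rep_iso :: "('o, 'm, 'k::division_ring) lcat \<Rightarrow> ('o, 'm, 'k) rep \<Rightarrow> ('o, 'm, 'k) rep
    \<Rightarrow> ('o \<Rightarrow> 'k mat) \<Rightarrow> bool" where
  "rep_iso C A B f \<longleftrightarrow> rep_hom C A B f \<and>
    (\<forall>u. \<exists>g. g \<in> carrier_mat (rdim A u) (rdim B u) \<and>
              g * f u = 1\<^sub>m (rdim A u) \<and> f u * g = 1\<^sub>m (rdim B u))"

definition isomorphic :: "('o, 'm, 'k::division_ring) lcat \<Rightarrow> ('o, 'm, 'k) rep \<Rightarrow> ('o, 'm, 'k) rep \<Rightarrow> bool" where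
  "isomorphic C A B \<longleftrightarrow> (\<exists>f. rep_iso C A B f)"

definition Aut :: "('o, 'm, 'k::division_ring) lcat \<Rightarrow> ('o, 'm, 'k) rep \<Rightarrow> ('o \<Rightarrow> 'k mat) set" where
  "Aut C B = {f. rep_iso C B B f}"

definition dsum :: "('o, 'm, 'k::division_ring) lcat \<Rightarrow> ('o, 'm, 'k) rep \<Rightarrow> ('o, 'm, 'k) rep \<Rightarrow> ('o, 'm, 'k) rep" where
  "dsum C A B = \<lparr> rdim = (\<lambda>u. rdim A u + rdim B u),
     rmap = (\<lambda>\<alpha>. four_block_mat (rmap A \<alpha>) (0\<^sub>m (rdim A (Cod C \<alpha>)) (rdim B (Dom C \<alpha>)))
                                 (0\<^sub>m (rdim B (Cod C \<alpha>)) (rdim A (Dom C \<alpha>))) (rmap B \<alpha>)) \<rparr>"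

definition nonzero_rep :: "('o, 'm, 'k) rep \<Rightarrow> bool" where
  "nonzero_rep A \<longleftrightarrow> (\<exists>u. rdim A u \<noteq> 0)"

definition indecomposable :: "('o, 'm, 'k::division_ring) lcat \<Rightarrow> ('o, 'm, 'k) rep \<Rightarrow> bool" where
  "indecomposable C A \<longleftrightarrow> is_rep C A \<and> nonzero_rep A \<and>
     \<not> (\<exists>B1 B2. is_rep C B1 \<and> is_rep C B2 \<and> nonzero_rep B1 \<and> nonzero_rep B2 \<and>
               isomorphic C A (dsum C B1 B2))"

text \<open>In coordinates, the dual of K^n (semilinear forms) is again K^n and the adjoint
  of a matrix M is its conjugate transpose.\<close>
definition cadj :: "('k \<Rightarrow> 'k) \<Rightarrow> 'k mat \<Rightarrow> 'k mat" where
  "cadj cj M = map_mat cj (transpose_mat M)"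

definition rep_adj :: "('o, 'm, 'k) lcat \<Rightarrow> ('k \<Rightarrow> 'k) \<Rightarrow> ('o, 'm, 'k) rep \<Rightarrow> ('o, 'm, 'k) rep" where
  "rep_adj C cj A = \<lparr> rdim = (\<lambda>u. rdim A (ostar C u)),
                      rmap = (\<lambda>\<alpha>. cadj cj (rmap A (mstar C \<alpha>))) \<rparr>"

definition mor_adj :: "('o, 'm, 'k) lcat \<Rightarrow> ('k \<Rightarrow> 'k) \<Rightarrow> ('o \<Rightarrow> 'k mat) \<Rightarrow> ('o \<Rightarrow> 'k mat)" where
  "mor_adj C cj f = (\<lambda>u. cadj cj (f (ostar C u)))"

definition selfadjoint :: "('o, 'm, 'k::division_ring) lcat \<Rightarrow> ('k \<Rightarrow> 'k) \<Rightarrow> ('o, 'm, 'k) rep \<Rightarrow> bool" where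
  "selfadjoint C cj A \<longleftrightarrow> is_rep C A \<and> A = rep_adj C cj A"

definition rep_congruent :: "('o, 'm, 'k::division_ring) lcat \<Rightarrow> ('k \<Rightarrow> 'k) \<Rightarrow> ('o, 'm, 'k) rep \<Rightarrow> ('o, 'm, 'k) rep \<Rightarrow> bool" where
  "rep_congruent C cj A B \<longleftrightarrow> selfadjoint C cj A \<and> selfadjoint C cj B \<and>
     (\<exists>\<phi>. rep_iso C A B \<phi> \<and>
          (\<forall>u. mor_adj C cj \<phi> u * \<phi> u = 1\<^sub>m (rdim A u) \<and> \<phi> u * mor_adj C cj \<phi> u = 1\<^sub>m (rdim B u)))"

definition S0_partition :: "('o, 'm, 'k) lcat \<Rightarrow> 'o set \<Rightarrow> bool" where
  "S0_partition C S0 \<longleftrightarrow> (\<forall>u. u \<in> S0 \<longleftrightarrow> ostar C u \<notin> S0)"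

definition minv :: "nat \<Rightarrow> 'k::division_ring mat \<Rightarrow> 'k mat" where
  "minv n M = (SOME N. N \<in> carrier_mat n n \<and> N * M = 1\<^sub>m n \<and> M * N = 1\<^sub>m n)"

definition ftilde :: "'o set \<Rightarrow> ('o, 'm, 'k::division_ring) rep \<Rightarrow> ('o \<Rightarrow> 'k mat) \<Rightarrow> 'o \<Rightarrow> 'k mat" where
  "ftilde S0 B f v = (if v \<in> S0 then f v else 1\<^sub>m (rdim B v))"

definition twist :: "('o, 'm, 'k::division_ring) lcat \<Rightarrow> 'o set \<Rightarrow> ('o, 'm, 'k) rep \<Rightarrow> ('o \<Rightarrow> 'k mat)
    \<Rightarrow> ('o, 'm, 'k) rep" where
  "twist C S0 B f = \<lparr> rdim = rdim B,
     rmap = (\<lambda>\<alpha>. minv (rdim B (Cod C \<alpha>)) (ftilde S0 B f (Cod C \<alpha>)) * rmap B \<alpha>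
                   * ftilde S0 B f (Dom C \<alpha>)) \<rparr>"

definition complete_indec_set :: "('o, 'm, 'k::division_ring) lcat \<Rightarrow> ('o, 'm, 'k) rep set \<Rightarrow> bool" where
  "complete_indec_set C I \<longleftrightarrow>
     (\<forall>X\<in>I. indecomposable C X) \<and>
     (\<forall>X\<in>I. \<forall>Y\<in>I. X \<noteq> Y \<longrightarrow> \<not> isomorphic C X Y) \<and>
     (\<forall>Z. indecomposable C Z \<longrightarrow> (\<exists>X\<in>I. isomorphic C Z X))"

definition is_ind0 :: "('o, 'm, 'k::division_ring) lcat \<Rightarrow> ('k \<Rightarrow> 'k) \<Rightarrow> ('o, 'm, 'k) rep set
    \<Rightarrow> ('o, 'm, 'k) rep set \<Rightarrow> bool" where
  "is_ind0 C cj I J \<longleftrightarrow> complete_indec_set C I \<and>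
     (\<exists>g. J = g ` {X\<in>I. \<exists>S. selfadjoint C cj S \<and> isomorphic C X S} \<and>
          (\<forall>X\<in>I. (\<exists>S. selfadjoint C cj S \<and> isomorphic C X S) \<longrightarrow>
                  selfadjoint C cj (g X) \<and> isomorphic C X (g X)))"

end

theory Submission
  imports Defs
begin

text \<open>If \<open>\<phi> : A \<rightarrow> B\<close> is an isomorphism of selfadjoint representations, so is
  \<open>\<phi>\<degree> : B \<rightarrow> A\<close>, hence \<open>f = \<phi>\<phi>\<degree>\<close> is an automorphism of \<open>B\<close> with \<open>f\<degree> = f\<close>.
  Let \<open>\<psi>\<close> be \<open>(\<phi>\<degree>)\<inverse>\<close> on \<open>S\<^sub>0\<close> and \<open>\<phi>\<close> on \<open>S\<^sub>0\<^sup>*\<close>. Since \<open>*\<close> swaps \<open>S\<^sub>0\<close> and \<open>S\<^sub>0\<^sup>*\<close>,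
  \<open>\<psi>\<degree> = \<psi>\<inverse>\<close>, and since \<open>f\<^sup>~ = \<phi>\<psi>\<degree>\<close>, the family \<open>\<psi>\<close> conjugates \<open>A\<close> into \<open>B\<^sup>f\<close>;
  so \<open>A\<close> is congruent to \<open>B\<^sup>f\<close>. For \<open>B\<close> take the member of \<open>ind\<^sub>0\<close> attached to the
  indecomposable representation of the complete set that is isomorphic to \<open>A\<close>.\<close>

lemma skew_involution_simps:
  assumes "skew_involution cj"
  shows "cj (cj a) = a" "cj (a + b) = cj a + cj b" "cj (a * b) = cj b * cj a"
    and "cj 0 = 0" "cj 1 = 1"
proof -
  show inv: "cj (cj a) = a" and add: "cj (a + b) = cj a + cj b" and mult: "cj (a * b) = cj b * cj a"
    for a b using assms unfolding skew_involution_def by auto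
  show "cj 0 = 0" using add[of 0 0] by simp
  have "cj (cj 1 * 1) = cj 1 * 1" using mult[of "cj 1" 1] inv by simp
  then show "cj 1 = 1" using inv by simp
qed

lemma skew_involution_sum:
  assumes "skew_involution cj" "finite S"
  shows "cj (sum f S) = (\<Sum>i\<in>S. cj (f i))"
  using assms(2) by (induction S rule: finite_induct) (auto simp: skew_involution_simps[OF assms(1)])

lemma cadj_carrier_mat [simp]: "M \<in> carrier_mat nr nc \<Longrightarrow> cadj cj M \<in> carrier_mat nc nr"
  unfolding cadj_def by auto

lemma cadj_mult:
  assumes cj: "skew_involution cj"
    and "(M :: 'k::division_ring mat) \<in> carrier_mat n m" "N \<in> carrier_mat m k"
  shows "cadj cj (M * N) = cadj cj N * cadj cj M"
  using assms(2,3)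
  by (intro eq_matI)
     (auto simp: scalar_prod_def skew_involution_sum[OF cj] skew_involution_simps[OF cj]
       cadj_def)

lemma cadj_cadj [simp]: "skew_involution cj \<Longrightarrow> cadj cj (cadj cj M) = M"
  by (rule eq_matI) (auto simp: cadj_def skew_involution_simps)

lemma cadj_one [simp]: "skew_involution cj \<Longrightarrow> cadj cj (1\<^sub>m n) = (1\<^sub>m n :: 'k::division_ring mat)"
  by (rule eq_matI) (auto simp: cadj_def skew_involution_simps)

lemma lin_cat_invD:
  assumes "lin_cat_inv cj C"
  shows "ostar C (ostar C u) = u"
    and "\<alpha> \<in> hom C u v \<Longrightarrow> mstar C \<alpha> \<in> hom C (ostar C v) (ostar C u)"
    and "Ident C u \<in> hom C u u"
    and "\<alpha> \<in> hom C u v \<Longrightarrow> \<beta> \<in> hom C v w \<Longrightarrow> Comp C \<beta> \<alpha> \<in> hom C u w"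
    and "\<alpha> \<in> hom C u v \<Longrightarrow> \<beta> \<in> hom C u v \<Longrightarrow> Add C \<alpha> \<beta> \<in> hom C u v"
    and "\<alpha> \<in> hom C u v \<Longrightarrow> a \<in> center \<Longrightarrow> Smul C \<alpha> a \<in> hom C u v"
  using assms unfolding lin_cat_inv_def by simp_all

lemma in_hom_Dom_Cod: "\<alpha> \<in> hom C (Dom C \<alpha>) (Cod C \<alpha>)"
  unfolding hom_def by simp

lemma is_repD:
  assumes "is_rep C A"
  shows "finite {u. rdim A u \<noteq> 0}"
    and "\<alpha> \<in> hom C u v \<Longrightarrow> rmap A \<alpha> \<in> carrier_mat (rdim A v) (rdim A u)"
    and "rmap A (Ident C u) = 1\<^sub>m (rdim A u)"
    and "\<alpha> \<in> hom C u v \<Longrightarrow> \<beta> \<in> hom C v w \<Longrightarrow> rmap A (Comp C \<beta> \<alpha>) = rmap A \<beta> * rmap A \<alpha>"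
    and "\<alpha> \<in> hom C u v \<Longrightarrow> \<beta> \<in> hom C u v \<Longrightarrow> rmap A (Add C \<alpha> \<beta>) = rmap A \<alpha> + rmap A \<beta>"
    and "\<alpha> \<in> hom C u v \<Longrightarrow> a \<in> center \<Longrightarrow>
      rmap A (Smul C \<alpha> a) = map_mat (\<lambda>x. x * a) (rmap A \<alpha>)"
  using assms unfolding is_rep_def by simp_all

lemma selfadjointD:
  assumes "selfadjoint C cj A"
  shows "is_rep C A" "rdim A (ostar C u) = rdim A u" "rmap A \<alpha> = cadj cj (rmap A (mstar C \<alpha>))"
proof -
  show "is_rep C A" using assms unfolding selfadjoint_def by blast
  have "A = rep_adj C cj A" using assms unfolding selfadjoint_def by blast
  then have "rdim A = (\<lambda>u. rdim A (ostar C u))" "rmap A = (\<lambda>\<alpha>. cadj cj (rmap A (mstar C \<alpha>)))"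
    unfolding rep_adj_def by (metis rep.select_convs)+
  then show "rdim A (ostar C u) = rdim A u" "rmap A \<alpha> = cadj cj (rmap A (mstar C \<alpha>))"
    by metis+
qed

lemma mult_map_mat_scalar:
  assumes "(M :: 'k::division_ring mat) \<in> carrier_mat n m" "N \<in> carrier_mat m k"
  shows "M * map_mat (\<lambda>x. x * a) N = map_mat (\<lambda>x. x * a) (M * N)"
  using assms by (intro eq_matI) (auto simp: scalar_prod_def sum_distrib_right mult.assoc)

lemma map_mat_central_scalar_mult:
  assumes "(M :: 'k::division_ring mat) \<in> carrier_mat n m" "N \<in> carrier_mat m k" "a \<in> center"
  shows "map_mat (\<lambda>x. x * a) M * N = map_mat (\<lambda>x. x * a) (M * N)"
proof -
  have "a * b = b * a" for b using assms(3) unfolding center_def by auto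
  with assms(1,2) show ?thesis
    by (intro eq_matI) (auto simp: scalar_prod_def sum_distrib_right mult.assoc)
qed

lemma mult_conjugates:
  fixes P :: "'k::semiring_1 mat"
  assumes P: "P \<in> carrier_mat r1 n1" and M: "M \<in> carrier_mat n1 n2" and Q: "Q \<in> carrier_mat n2 r2"
    and P': "P' \<in> carrier_mat r2 n2" and N: "N \<in> carrier_mat n2 n3" and Q': "Q' \<in> carrier_mat n3 r3"
    and QP': "Q * P' = 1\<^sub>m n2"
  shows "(P * M * Q) * (P' * N * Q') = P * (M * N) * Q'"
proof -
  have P'N: "P' * N \<in> carrier_mat r2 n3"
    using P' N by (rule mult_carrier_mat)
  have "Q * (P' * N * Q') = Q * (P' * N) * Q'"
    by (rule assoc_mult_mat[OF Q P'N Q', symmetric])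
  also have "\<dots> = N * Q'"
    using assoc_mult_mat[OF Q P' N] QP' N by simp
  finally have cancel: "Q * (P' * N * Q') = N * Q'" .
  have PM: "P * M \<in> carrier_mat r1 n2"
    using P M by (rule mult_carrier_mat)
  have "(P * M * Q) * (P' * N * Q') = (P * M) * (N * Q')"
    using assoc_mult_mat[OF PM Q mult_carrier_mat[OF P'N Q']] cancel by simp
  also have "\<dots> = P * (M * N) * Q'"
    using assoc_mult_mat[OF PM N Q'] assoc_mult_mat[OF P M N] by simp
  finally show ?thesis .
qed

lemma is_rep_conjugate:
  fixes A R :: "('o, 'm, 'k::division_ring) rep"
  assumes C: "lin_cat_inv cj C" and A: "is_rep C A"
    and fin: "finite {u. rdim R u \<noteq> 0}"
    and P: "\<And>u. P u \<in> carrier_mat (rdim R u) (rdim A u)"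
    and Q: "\<And>u. Q u \<in> carrier_mat (rdim A u) (rdim R u)"
    and QP: "\<And>u. Q u * P u = 1\<^sub>m (rdim A u)"
    and PQ: "\<And>u. P u * Q u = 1\<^sub>m (rdim R u)"
    and R: "\<And>u v \<alpha>. \<alpha> \<in> hom C u v \<Longrightarrow> rmap R \<alpha> = P v * rmap A \<alpha> * Q u"
  shows "is_rep C R"
  unfolding is_rep_def
proof (intro conjI allI impI)
  fix u v \<alpha> assume \<alpha>: "\<alpha> \<in> hom C u v"
  note A\<alpha> = is_repD(2)[OF A \<alpha>]
  have PA\<alpha>: "P v * rmap A \<alpha> \<in> carrier_mat (rdim R v) (rdim A u)"
    using P A\<alpha> by (rule mult_carrier_mat)
  show "rmap R \<alpha> \<in> carrier_mat (rdim R v) (rdim R u)"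
    unfolding R[OF \<alpha>] using PA\<alpha> Q by (rule mult_carrier_mat)
  {
    fix w \<beta> assume \<beta>: "\<beta> \<in> hom C v w"
    have "rmap R (Comp C \<beta> \<alpha>) = P w * (rmap A \<beta> * rmap A \<alpha>) * Q u"
      using R[OF lin_cat_invD(4)[OF C \<alpha> \<beta>]] is_repD(4)[OF A \<alpha> \<beta>] by simp
    also have "\<dots> = rmap R \<beta> * rmap R \<alpha>"
      unfolding R[OF \<alpha>] R[OF \<beta>]
      by (rule mult_conjugates[OF P is_repD(2)[OF A \<beta>] Q P A\<alpha> Q QP, symmetric])
    finally show "rmap R (Comp C \<beta> \<alpha>) = rmap R \<beta> * rmap R \<alpha>" .
  }
  {
    fix \<beta> assume \<beta>: "\<beta> \<in> hom C u v"
    note A\<beta> = is_repD(2)[OF A \<beta>]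
    have "rmap R (Add C \<alpha> \<beta>) = P v * (rmap A \<alpha> + rmap A \<beta>) * Q u"
      using R[OF lin_cat_invD(5)[OF C \<alpha> \<beta>]] is_repD(5)[OF A \<alpha> \<beta>] by simp
    also have "\<dots> = rmap R \<alpha> + rmap R \<beta>"
      unfolding R[OF \<alpha>] R[OF \<beta>] mult_add_distrib_mat[OF P A\<alpha> A\<beta>]
      using PA\<alpha> mult_carrier_mat[OF P A\<beta>] Q by (rule add_mult_distrib_mat)
    finally show "rmap R (Add C \<alpha> \<beta>) = rmap R \<alpha> + rmap R \<beta>" .
  }
  {
    fix a :: 'k assume a: "a \<in> center"
    have "rmap R (Smul C \<alpha> a) = P v * map_mat (\<lambda>x. x * a) (rmap A \<alpha>) * Q u"
      using R[OF lin_cat_invD(6)[OF C \<alpha> a]] is_repD(6)[OF A \<alpha> a] by simp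
    also have "\<dots> = map_mat (\<lambda>x. x * a) (rmap R \<alpha>)"
      unfolding R[OF \<alpha>] mult_map_mat_scalar[OF P A\<alpha>]
      using PA\<alpha> Q a by (rule map_mat_central_scalar_mult)
    finally show "rmap R (Smul C \<alpha> a) = map_mat (\<lambda>x. x * a) (rmap R \<alpha>)" .
  }
next
  fix u
  show "rmap R (Ident C u) = 1\<^sub>m (rdim R u)"
    using R[OF lin_cat_invD(3)[OF C]] is_repD(3)[OF A] right_mult_one_mat[OF P] PQ by simp
qed (fact fin)

lemma mult_inverses:
  fixes X :: "'a::semiring_1 mat"
  assumes X: "X \<in> carrier_mat n m" and Y: "Y \<in> carrier_mat m k"
    and Y': "Y' \<in> carrier_mat k m" and X': "X' \<in> carrier_mat m n"
    and "Y * Y' = 1\<^sub>m m" "X * X' = 1\<^sub>m n"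
  shows "(X * Y) * (Y' * X') = 1\<^sub>m n"
proof -
  have "(X * Y) * (Y' * X') = X * ((Y * Y') * X')"
    using assoc_mult_mat[OF X Y mult_carrier_mat[OF Y' X']] assoc_mult_mat[OF Y Y' X'] by simp
  then show ?thesis
    using assms X' by simp
qed

lemma mult_regroup:
  fixes G :: "'a::semiring_1 mat"
  assumes G: "G \<in> carrier_mat r n1" and P: "P \<in> carrier_mat n1 n2" and M: "M \<in> carrier_mat n2 n3"
    and Q: "Q \<in> carrier_mat n3 n4" and F: "F \<in> carrier_mat n4 s"
  shows "G * (P * M * Q) * F = (G * P) * M * (Q * F)"
proof -
  have PM: "P * M \<in> carrier_mat n1 n3" and GPM: "G * P * M \<in> carrier_mat r n3"
    using G P M by auto
  have "G * (P * M * Q) * F = G * (P * M) * Q * F"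
    using assoc_mult_mat[OF G PM Q] by simp
  also have "\<dots> = G * P * M * Q * F"
    using assoc_mult_mat[OF G P M] by simp
  also have "\<dots> = (G * P) * M * (Q * F)"
    using assoc_mult_mat[OF GPM Q F] by simp
  finally show ?thesis .
qed

lemma rep_isoD:
  assumes "rep_iso C A B f"
  obtains g where "\<And>u. f u \<in> carrier_mat (rdim B u) (rdim A u)"
    and "\<And>u v \<alpha>. \<alpha> \<in> hom C u v \<Longrightarrow> rmap B \<alpha> * f u = f v * rmap A \<alpha>"
    and "\<And>u. g u \<in> carrier_mat (rdim A u) (rdim B u)"
    and "\<And>u. g u * f u = 1\<^sub>m (rdim A u)" "\<And>u. f u * g u = 1\<^sub>m (rdim B u)"
proof -
  from assms have "\<forall>u. \<exists>g. g \<in> carrier_mat (rdim A u) (rdim B u) \<and>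
      g * f u = 1\<^sub>m (rdim A u) \<and> f u * g = 1\<^sub>m (rdim B u)"
    unfolding rep_iso_def by blast
  then obtain g where "\<forall>u. g u \<in> carrier_mat (rdim A u) (rdim B u) \<and>
      g u * f u = 1\<^sub>m (rdim A u) \<and> f u * g u = 1\<^sub>m (rdim B u)"
    by metis
  with assms show thesis
    using that unfolding rep_iso_def rep_hom_def by blast
qed

lemma rep_isoI:
  assumes "\<And>u. f u \<in> carrier_mat (rdim B u) (rdim A u)"
    and "\<And>u v \<alpha>. \<alpha> \<in> hom C u v \<Longrightarrow> rmap B \<alpha> * f u = f v * rmap A \<alpha>"
    and "\<And>u. g u \<in> carrier_mat (rdim A u) (rdim B u)"
    and "\<And>u. g u * f u = 1\<^sub>m (rdim A u)" "\<And>u. f u * g u = 1\<^sub>m (rdim B u)"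
  shows "rep_iso C A B f"
  unfolding rep_iso_def rep_hom_def using assms by blast

lemma rep_iso_conjugate:
  assumes iso: "rep_iso C A B f" and B: "is_rep C B"
    and g: "\<And>u. g u \<in> carrier_mat (rdim A u) (rdim B u)" "\<And>u. f u * g u = 1\<^sub>m (rdim B u)"
    and \<alpha>: "\<alpha> \<in> hom C u v"
  shows "rmap B \<alpha> = f v * rmap A \<alpha> * g u"
proof -
  obtain f_carrier: "\<And>u. f u \<in> carrier_mat (rdim B u) (rdim A u)"
    and natural: "rmap B \<alpha> * f u = f v * rmap A \<alpha>"
    using rep_isoD[OF iso] \<alpha> by metis
  note B\<alpha> = is_repD(2)[OF B \<alpha>]
  have "rmap B \<alpha> = rmap B \<alpha> * (f u * g u)"
    using g(2) B\<alpha> by simp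
  also have "\<dots> = f v * rmap A \<alpha> * g u"
    using assoc_mult_mat[OF B\<alpha> f_carrier g(1)] natural by simp
  finally show ?thesis .
qed

lemma rep_iso_inverse:
  assumes iso: "rep_iso C A B f" and A: "is_rep C A" and B: "is_rep C B"
    and g: "\<And>u. g u \<in> carrier_mat (rdim A u) (rdim B u)"
      "\<And>u. g u * f u = 1\<^sub>m (rdim A u)" "\<And>u. f u * g u = 1\<^sub>m (rdim B u)"
  shows "rep_iso C B A g"
proof (rule rep_isoI[where g = f])
  obtain f_carrier: "\<And>u. f u \<in> carrier_mat (rdim B u) (rdim A u)"
    using rep_isoD[OF iso] by metis
  then show "\<And>u. f u \<in> carrier_mat (rdim B u) (rdim A u)" .
  fix u v \<alpha> assume \<alpha>: "\<alpha> \<in> hom C u v"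
  note A\<alpha> = is_repD(2)[OF A \<alpha>]
  have fA: "f v * rmap A \<alpha> \<in> carrier_mat (rdim B v) (rdim A u)"
    using f_carrier A\<alpha> by (rule mult_carrier_mat)
  have "g v * rmap B \<alpha> = g v * (f v * rmap A \<alpha> * g u)"
    using rep_iso_conjugate[OF iso B g(1,3) \<alpha>] by simp
  also have "\<dots> = (g v * f v) * rmap A \<alpha> * g u"
    using assoc_mult_mat[OF g(1) fA g(1)] assoc_mult_mat[OF g(1) f_carrier A\<alpha>] by simp
  finally show "rmap A \<alpha> * g u = g v * rmap B \<alpha>"
    using g(2) A\<alpha> by simp
qed (use g in auto)

lemma rep_iso_comp:
  assumes h: "rep_iso C A X h" and k: "rep_iso C X B k"
    and A: "is_rep C A" and X: "is_rep C X" and B: "is_rep C B"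
  shows "rep_iso C A B (\<lambda>u. k u * h u)"
proof -
  obtain h' where h_carrier: "\<And>u. h u \<in> carrier_mat (rdim X u) (rdim A u)"
    and h_natural: "\<And>u v \<alpha>. \<alpha> \<in> hom C u v \<Longrightarrow> rmap X \<alpha> * h u = h v * rmap A \<alpha>"
    and h'_carrier: "\<And>u. h' u \<in> carrier_mat (rdim A u) (rdim X u)"
    and h'h: "\<And>u. h' u * h u = 1\<^sub>m (rdim A u)" and hh': "\<And>u. h u * h' u = 1\<^sub>m (rdim X u)"
    using rep_isoD[OF h] by metis
  obtain k' where k_carrier: "\<And>u. k u \<in> carrier_mat (rdim B u) (rdim X u)"
    and k_natural: "\<And>u v \<alpha>. \<alpha> \<in> hom C u v \<Longrightarrow> rmap B \<alpha> * k u = k v * rmap X \<alpha>"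
    and k'_carrier: "\<And>u. k' u \<in> carrier_mat (rdim X u) (rdim B u)"
    and k'k: "\<And>u. k' u * k u = 1\<^sub>m (rdim X u)" and kk': "\<And>u. k u * k' u = 1\<^sub>m (rdim B u)"
    using rep_isoD[OF k] by metis
  show ?thesis
  proof (rule rep_isoI[where g = "\<lambda>u. h' u * k' u"])
    fix u v \<alpha> assume \<alpha>: "\<alpha> \<in> hom C u v"
    note B\<alpha> = is_repD(2)[OF B \<alpha>] and X\<alpha> = is_repD(2)[OF X \<alpha>] and A\<alpha> = is_repD(2)[OF A \<alpha>]
    have "rmap B \<alpha> * (k u * h u) = k v * (rmap X \<alpha> * h u)"
      using assoc_mult_mat[OF B\<alpha> k_carrier h_carrier] assoc_mult_mat[OF k_carrier X\<alpha> h_carrier]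
        k_natural[OF \<alpha>] by simp
    also have "\<dots> = k v * h v * rmap A \<alpha>"
      using assoc_mult_mat[OF k_carrier h_carrier A\<alpha>] h_natural[OF \<alpha>] by simp
    finally show "rmap B \<alpha> * (k u * h u) = k v * h v * rmap A \<alpha>" .
  next
    fix u
    show "h' u * k' u * (k u * h u) = 1\<^sub>m (rdim A u)"
      by (rule mult_inverses[OF h'_carrier k'_carrier k_carrier h_carrier k'k h'h])
    show "k u * h u * (h' u * k' u) = 1\<^sub>m (rdim B u)"
      by (rule mult_inverses[OF k_carrier h_carrier h'_carrier k'_carrier hh' kk'])
  qed (use mult_carrier_mat[OF k_carrier h_carrier] mult_carrier_mat[OF h'_carrier k'_carrier] in auto)
qed

lemma isomorphic_sym:
  assumes "isomorphic C A B" "is_rep C A" "is_rep C B"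
  shows "isomorphic C B A"
proof -
  obtain f where f: "rep_iso C A B f"
    using assms(1) unfolding isomorphic_def by blast
  obtain g where "\<And>u. g u \<in> carrier_mat (rdim A u) (rdim B u)"
    "\<And>u. g u * f u = 1\<^sub>m (rdim A u)" "\<And>u. f u * g u = 1\<^sub>m (rdim B u)"
    using rep_isoD[OF f] by metis
  then have "rep_iso C B A g"
    using rep_iso_inverse[OF f assms(2,3)] by blast
  then show ?thesis
    unfolding isomorphic_def by blast
qed

lemma isomorphic_trans:
  assumes "isomorphic C A X" "isomorphic C X B" "is_rep C A" "is_rep C X" "is_rep C B"
  shows "isomorphic C A B"
  using assms(1,2) rep_iso_comp[OF _ _ assms(3-5)] unfolding isomorphic_def by blast

lemma cadj_inverse:
  assumes cj: "skew_involution cj"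
    and F: "(F :: 'k::division_ring mat) \<in> carrier_mat n m" and G: "G \<in> carrier_mat m n"
    and GF: "G * F = 1\<^sub>m m"
  shows "cadj cj F * cadj cj G = 1\<^sub>m m"
  using cadj_mult[OF cj G F] GF cj by simp

lemma mor_adj_carrier_mat:
  assumes "\<And>u. F u \<in> carrier_mat (m u) (n u)"
    and "m (ostar C u) = m u" "n (ostar C u) = n u"
  shows "mor_adj C cj F u \<in> carrier_mat (n u) (m u)"
  unfolding mor_adj_def using cadj_carrier_mat[OF assms(1)] assms(2,3) by metis

lemma mor_adj_inverse:
  assumes cj: "skew_involution cj"
    and F: "\<And>u. (F u :: 'k::division_ring mat) \<in> carrier_mat (m u) (n u)"
    and G: "\<And>u. G u \<in> carrier_mat (n u) (m u)"
    and GF: "\<And>u. G u * F u = 1\<^sub>m (n u)" and n: "n (ostar C u) = n u"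
  shows "mor_adj C cj F u * mor_adj C cj G u = 1\<^sub>m (n u)"
  unfolding mor_adj_def using cadj_inverse[OF cj F G GF] n by metis

lemma rep_iso_mor_adj:
  assumes cj: "skew_involution cj" and C: "lin_cat_inv cj C"
    and A: "selfadjoint C cj A" and B: "selfadjoint C cj B" and iso: "rep_iso C A B \<phi>"
  shows "rep_iso C B A (mor_adj C cj \<phi>)"
proof -
  obtain \<phi>' where \<phi>_carrier: "\<And>u. \<phi> u \<in> carrier_mat (rdim B u) (rdim A u)"
    and \<phi>_natural: "\<And>u v \<alpha>. \<alpha> \<in> hom C u v \<Longrightarrow> rmap B \<alpha> * \<phi> u = \<phi> v * rmap A \<alpha>"
    and \<phi>'_carrier: "\<And>u. \<phi>' u \<in> carrier_mat (rdim A u) (rdim B u)"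
    and \<phi>'\<phi>: "\<And>u. \<phi>' u * \<phi> u = 1\<^sub>m (rdim A u)" and \<phi>\<phi>': "\<And>u. \<phi> u * \<phi>' u = 1\<^sub>m (rdim B u)"
    using rep_isoD[OF iso] by metis
  note dims = selfadjointD(2)[OF A] selfadjointD(2)[OF B]
  show ?thesis
  proof (rule rep_isoI[where g = "mor_adj C cj \<phi>'"])
    fix u
    show "mor_adj C cj \<phi> u \<in> carrier_mat (rdim A u) (rdim B u)"
      using \<phi>_carrier dims(2,1) by (rule mor_adj_carrier_mat)
    show "mor_adj C cj \<phi>' u \<in> carrier_mat (rdim B u) (rdim A u)"
      using \<phi>'_carrier dims(1,2) by (rule mor_adj_carrier_mat)
    show "mor_adj C cj \<phi>' u * mor_adj C cj \<phi> u = 1\<^sub>m (rdim B u)"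
      using cj \<phi>'_carrier \<phi>_carrier \<phi>\<phi>' dims(2) by (rule mor_adj_inverse)
    show "mor_adj C cj \<phi> u * mor_adj C cj \<phi>' u = 1\<^sub>m (rdim A u)"
      using cj \<phi>_carrier \<phi>'_carrier \<phi>'\<phi> dims(1) by (rule mor_adj_inverse)
  next
    fix u v \<alpha> assume \<alpha>: "\<alpha> \<in> hom C u v"
    have \<alpha>': "mstar C \<alpha> \<in> hom C (ostar C v) (ostar C u)"
      using lin_cat_invD(2)[OF C \<alpha>] .
    have "mor_adj C cj \<phi> v * rmap B \<alpha> = cadj cj (rmap B (mstar C \<alpha>) * \<phi> (ostar C v))"
      unfolding mor_adj_def selfadjointD(3)[OF B, of \<alpha>]
      using cadj_mult[OF cj is_repD(2)[OF selfadjointD(1)[OF B] \<alpha>'] \<phi>_carrier] by simp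
    also have "\<dots> = cadj cj (\<phi> (ostar C u) * rmap A (mstar C \<alpha>))"
      using \<phi>_natural[OF \<alpha>'] by simp
    also have "\<dots> = rmap A \<alpha> * mor_adj C cj \<phi> u"
      unfolding mor_adj_def selfadjointD(3)[OF A, of \<alpha>]
      using cadj_mult[OF cj \<phi>_carrier is_repD(2)[OF selfadjointD(1)[OF A] \<alpha>']] by simp
    finally show "rmap A \<alpha> * mor_adj C cj \<phi> u = mor_adj C cj \<phi> v * rmap B \<alpha>" ..
  qed
qed

lemma mor_adj_right_inverse_dim:
  assumes F: "\<And>u. F u \<in> carrier_mat (m u) (n u)" and n: "\<And>u. n (ostar C u) = n u"
    and FF': "F u * mor_adj C cj F u = 1\<^sub>m (m u)"
  shows "m (ostar C u) = m u"
proof -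
  have "mor_adj C cj F u \<in> carrier_mat (n u) (m (ostar C u))"
    using cadj_carrier_mat[OF F] n unfolding mor_adj_def by metis
  then show ?thesis
    using arg_cong[OF FF', of dim_col] by simp
qed

lemma selfadjoint_conjugate:
  fixes A R :: "('o, 'm, 'k::division_ring) rep"
  assumes cj: "skew_involution cj" and C: "lin_cat_inv cj C" and A: "selfadjoint C cj A"
    and fin: "finite {u. rdim R u \<noteq> 0}"
    and P: "\<And>u. P u \<in> carrier_mat (rdim R u) (rdim A u)"
    and P'P: "\<And>u. mor_adj C cj P u * P u = 1\<^sub>m (rdim A u)"
    and PP': "\<And>u. P u * mor_adj C cj P u = 1\<^sub>m (rdim R u)"
    and R: "\<And>\<alpha>. rmap R \<alpha> = P (Cod C \<alpha>) * rmap A \<alpha> * mor_adj C cj P (Dom C \<alpha>)"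
  shows "selfadjoint C cj R"
proof -
  let ?P' = "mor_adj C cj P"
  note dimA = selfadjointD(2)[OF A]
  have dimR: "rdim R (ostar C u) = rdim R u" for u
    using P dimA PP' by (rule mor_adj_right_inverse_dim)
  have P'_carrier: "?P' u \<in> carrier_mat (rdim A u) (rdim R u)" for u
    using P dimR dimA by (rule mor_adj_carrier_mat)
  have R_hom: "rmap R \<alpha> = P v * rmap A \<alpha> * ?P' u" if "\<alpha> \<in> hom C u v" for u v \<alpha>
    using R that unfolding hom_def by simp
  have rep: "is_rep C R"
    using is_rep_conjugate[OF C selfadjointD(1)[OF A] fin P P'_carrier P'P PP' R_hom] .
  have rmap_adj: "rmap R \<alpha> = rmap (rep_adj C cj R) \<alpha>" for \<alpha>
  proof -
    define u v where "u = Dom C \<alpha>" and "v = Cod C \<alpha>"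
    have \<alpha>: "\<alpha> \<in> hom C u v"
      unfolding u_def v_def by (rule in_hom_Dom_Cod)
    have \<alpha>': "mstar C \<alpha> \<in> hom C (ostar C v) (ostar C u)"
      using lin_cat_invD(2)[OF C \<alpha>] .
    note A\<alpha>' = is_repD(2)[OF selfadjointD(1)[OF A] \<alpha>']
    have "rmap (rep_adj C cj R) \<alpha>
        = cadj cj (P (ostar C u) * rmap A (mstar C \<alpha>) * ?P' (ostar C v))"
      unfolding rep_adj_def using R_hom[OF \<alpha>'] by simp
    also have "\<dots> = cadj cj (?P' (ostar C v)) * (cadj cj (rmap A (mstar C \<alpha>)) * cadj cj (P (ostar C u)))"
      using cadj_mult[OF cj mult_carrier_mat[OF P A\<alpha>'] P'_carrier]
        cadj_mult[OF cj P A\<alpha>'] by simp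
    also have "\<dots> = P v * (rmap A \<alpha> * ?P' u)"
      using cj C selfadjointD(3)[OF A, of \<alpha>] unfolding mor_adj_def by (simp add: lin_cat_invD(1))
    also have "\<dots> = rmap R \<alpha>"
      using R_hom[OF \<alpha>] assoc_mult_mat[OF P is_repD(2)[OF selfadjointD(1)[OF A] \<alpha>] P'_carrier]
      by simp
    finally show ?thesis ..
  qed
  have "R = rep_adj C cj R"
  proof (rule rep.equality)
    show "rdim R = rdim (rep_adj C cj R)"
      using dimR by (simp add: rep_adj_def)
    show "rmap R = rmap (rep_adj C cj R)"
      using rmap_adj by (rule ext)
  qed simp
  with rep show ?thesis
    unfolding selfadjoint_def by blast
qed

lemma rep_congruent_conjugate:
  fixes A R :: "('o, 'm, 'k::division_ring) rep"
  assumes cj: "skew_involution cj" and C: "lin_cat_inv cj C" and A: "selfadjoint C cj A"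
    and fin: "finite {u. rdim R u \<noteq> 0}"
    and P: "\<And>u. P u \<in> carrier_mat (rdim R u) (rdim A u)"
    and P'P: "\<And>u. mor_adj C cj P u * P u = 1\<^sub>m (rdim A u)"
    and PP': "\<And>u. P u * mor_adj C cj P u = 1\<^sub>m (rdim R u)"
    and R: "\<And>\<alpha>. rmap R \<alpha> = P (Cod C \<alpha>) * rmap A \<alpha> * mor_adj C cj P (Dom C \<alpha>)"
  shows "rep_congruent C cj A R"
proof -
  let ?P' = "mor_adj C cj P"
  note dimA = selfadjointD(2)[OF A]
  have dimR: "rdim R (ostar C u) = rdim R u" for u
    using P dimA PP' by (rule mor_adj_right_inverse_dim)
  have P'_carrier: "?P' u \<in> carrier_mat (rdim A u) (rdim R u)" for u
    using P dimR dimA by (rule mor_adj_carrier_mat)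
  have R_hom: "rmap R \<alpha> = P v * rmap A \<alpha> * ?P' u" if "\<alpha> \<in> hom C u v" for u v \<alpha>
    using R that unfolding hom_def by simp
  have "rep_iso C A R P"
  proof (rule rep_isoI[where g = ?P'])
    fix u v \<alpha> assume \<alpha>: "\<alpha> \<in> hom C u v"
    have PA\<alpha>: "P v * rmap A \<alpha> \<in> carrier_mat (rdim R v) (rdim A u)"
      using P is_repD(2)[OF selfadjointD(1)[OF A] \<alpha>] by (rule mult_carrier_mat)
    have "rmap R \<alpha> * P u = P v * rmap A \<alpha> * (?P' u * P u)"
      using R_hom[OF \<alpha>] assoc_mult_mat[OF PA\<alpha> P'_carrier P] by simp
    then show "rmap R \<alpha> * P u = P v * rmap A \<alpha>"
      using P'P right_mult_one_mat[OF PA\<alpha>] by simp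
  qed (use P P'_carrier P'P PP' in auto)
  with A selfadjoint_conjugate[OF assms] P'P PP' show ?thesis
    unfolding rep_congruent_def by blast
qed

lemma minv_eqI:
  assumes M: "(M :: 'k::division_ring mat) \<in> carrier_mat n n" and N: "N \<in> carrier_mat n n"
    and "N * M = 1\<^sub>m n" "M * N = 1\<^sub>m n"
  shows "minv n M = N"
proof -
  have "\<exists>N. N \<in> carrier_mat n n \<and> N * M = 1\<^sub>m n \<and> M * N = 1\<^sub>m n"
    using assms by blast
  then have N': "minv n M \<in> carrier_mat n n" "minv n M * M = 1\<^sub>m n"
    unfolding minv_def by (metis (mono_tags, lifting) someI_ex)+
  have "minv n M = minv n M * (M * N)"
    using assms(4) N'(1) by simp
  also have "\<dots> = N"
    using assoc_mult_mat[OF N'(1) M N] N'(2) N by simp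
  finally show ?thesis .
qed

lemma Aut_iso_mult_mor_adj:
  assumes cj: "skew_involution cj" and C: "lin_cat_inv cj C"
    and A: "selfadjoint C cj A" and B: "selfadjoint C cj B" and iso: "rep_iso C A B \<phi>"
  shows "(\<lambda>u. \<phi> u * mor_adj C cj \<phi> u) \<in> Aut C B"
    and "mor_adj C cj (\<lambda>u. \<phi> u * mor_adj C cj \<phi> u) = (\<lambda>u. \<phi> u * mor_adj C cj \<phi> u)"
proof -
  let ?f = "\<lambda>u. \<phi> u * mor_adj C cj \<phi> u"
  note iso' = rep_iso_mor_adj[OF cj C A B iso]
  show "?f \<in> Aut C B"
    unfolding Aut_def
    using rep_iso_comp[OF iso' iso selfadjointD(1)[OF B] selfadjointD(1)[OF A] selfadjointD(1)[OF B]]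
    by simp
  obtain \<phi>_carrier: "\<And>u. \<phi> u \<in> carrier_mat (rdim B u) (rdim A u)"
    using rep_isoD[OF iso] by metis
  obtain \<phi>'_carrier: "\<And>u. mor_adj C cj \<phi> u \<in> carrier_mat (rdim A u) (rdim B u)"
    using rep_isoD[OF iso'] by metis
  show "mor_adj C cj ?f = ?f"
  proof
    fix u
    have "mor_adj C cj ?f u
        = cadj cj (mor_adj C cj \<phi> (ostar C u)) * cadj cj (\<phi> (ostar C u))"
      unfolding mor_adj_def[of C cj ?f] using cadj_mult[OF cj \<phi>_carrier \<phi>'_carrier] by simp
    also have "\<dots> = ?f u"
      using cj C unfolding mor_adj_def by (simp add: lin_cat_invD(1))
    finally show "mor_adj C cj ?f u = ?f u" .
  qed
qed

lemma mor_adj_glue: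
  assumes cj: "skew_involution cj" and C: "lin_cat_inv cj C" and S0: "S0_partition C S0"
  shows "mor_adj C cj (\<lambda>u. if u \<in> S0 then mor_adj C cj G u else F u)
       = (\<lambda>u. if u \<in> S0 then mor_adj C cj F u else G u)"
proof
  fix u
  have "ostar C u \<in> S0 \<longleftrightarrow> u \<notin> S0"
    using S0 lin_cat_invD(1)[OF C] unfolding S0_partition_def by metis
  then show "mor_adj C cj (\<lambda>u. if u \<in> S0 then mor_adj C cj G u else F u) u
      = (if u \<in> S0 then mor_adj C cj F u else G u)"
    using cj lin_cat_invD(1)[OF C] unfolding mor_adj_def by auto
qed

lemma rmap_twist_conjugate:
  assumes iso: "rep_iso C A B \<phi>" and A: "is_rep C A" and B: "is_rep C B"
    and \<phi>': "\<And>u. \<phi>' u \<in> carrier_mat (rdim A u) (rdim B u)"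
    and \<phi>'\<phi>: "\<And>u. \<phi>' u * \<phi> u = 1\<^sub>m (rdim A u)" and \<phi>\<phi>': "\<And>u. \<phi> u * \<phi>' u = 1\<^sub>m (rdim B u)"
    and \<psi>: "\<And>u. \<psi> u \<in> carrier_mat (rdim B u) (rdim A u)"
    and \<chi>: "\<And>u. \<chi> u \<in> carrier_mat (rdim A u) (rdim B u)"
    and \<chi>\<psi>: "\<And>u. \<chi> u * \<psi> u = 1\<^sub>m (rdim A u)" and \<psi>\<chi>: "\<And>u. \<psi> u * \<chi> u = 1\<^sub>m (rdim B u)"
    and F: "\<And>u. ftilde S0 B f u = \<phi> u * \<chi> u"
    and \<alpha>: "\<alpha> \<in> hom C u v"
  shows "rmap (twist C S0 B f) \<alpha> = \<psi> v * rmap A \<alpha> * \<chi> u"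
proof -
  obtain \<phi>_carrier: "\<And>u. \<phi> u \<in> carrier_mat (rdim B u) (rdim A u)"
    using rep_isoD[OF iso] by metis
  note A\<alpha> = is_repD(2)[OF A \<alpha>]
  have F_inv: "minv (rdim B w) (\<phi> w * \<chi> w) = \<psi> w * \<phi>' w" for w
    using mult_carrier_mat[OF \<phi>_carrier \<chi>] mult_carrier_mat[OF \<psi> \<phi>']
      mult_inverses[OF \<psi> \<phi>' \<phi>_carrier \<chi> \<phi>'\<phi> \<psi>\<chi>] mult_inverses[OF \<phi>_carrier \<chi> \<psi> \<phi>' \<chi>\<psi> \<phi>\<phi>']
    by (intro minv_eqI) auto
  have "rmap (twist C S0 B f) \<alpha> = (\<psi> v * \<phi>' v) * (\<phi> v * rmap A \<alpha> * \<phi>' u) * (\<phi> u * \<chi> u)"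
    using \<alpha> rep_iso_conjugate[OF iso B \<phi>' \<phi>\<phi>' \<alpha>]
    unfolding twist_def hom_def by (simp add: F_inv F)
  also have "\<dots> = (\<psi> v * \<phi>' v * \<phi> v) * rmap A \<alpha> * (\<phi>' u * (\<phi> u * \<chi> u))"
    using mult_regroup[OF mult_carrier_mat[OF \<psi> \<phi>'] \<phi>_carrier A\<alpha> \<phi>' mult_carrier_mat[OF \<phi>_carrier \<chi>]] .
  also have "\<dots> = \<psi> v * rmap A \<alpha> * \<chi> u"
    using assoc_mult_mat[OF \<psi> \<phi>' \<phi>_carrier] assoc_mult_mat[OF \<phi>' \<phi>_carrier \<chi>, symmetric] \<phi>'\<phi>
      right_mult_one_mat[OF \<psi>] left_mult_one_mat[OF \<chi>] by simp
  finally show ?thesis .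
qed

lemma rep_congruent_twist:
  fixes A B :: "('o, 'm, 'k::division_ring) rep"
  assumes cj: "skew_involution cj" and C: "lin_cat_inv cj C"
    and A: "selfadjoint C cj A" and B: "selfadjoint C cj B"
    and S0: "S0_partition C S0" and iso: "rep_iso C A B \<phi>"
  shows "rep_congruent C cj A (twist C S0 B (\<lambda>u. \<phi> u * mor_adj C cj \<phi> u))"
proof -
  obtain \<phi>' where \<phi>: "\<And>u. \<phi> u \<in> carrier_mat (rdim B u) (rdim A u)"
    and \<phi>': "\<And>u. \<phi>' u \<in> carrier_mat (rdim A u) (rdim B u)"
    and \<phi>'\<phi>: "\<And>u. \<phi>' u * \<phi> u = 1\<^sub>m (rdim A u)" and \<phi>\<phi>': "\<And>u. \<phi> u * \<phi>' u = 1\<^sub>m (rdim B u)"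
    using rep_isoD[OF iso] by metis
  note dims = selfadjointD(2)[OF A] selfadjointD(2)[OF B]
  let ?\<phi>\<^sub>a = "mor_adj C cj \<phi>" and ?\<phi>'\<^sub>a = "mor_adj C cj \<phi>'"
  have \<phi>\<^sub>a: "?\<phi>\<^sub>a u \<in> carrier_mat (rdim A u) (rdim B u)"
    and \<phi>'\<^sub>a: "?\<phi>'\<^sub>a u \<in> carrier_mat (rdim B u) (rdim A u)"
    and \<phi>\<^sub>a\<phi>'\<^sub>a: "?\<phi>\<^sub>a u * ?\<phi>'\<^sub>a u = 1\<^sub>m (rdim A u)"
    and \<phi>'\<^sub>a\<phi>\<^sub>a: "?\<phi>'\<^sub>a u * ?\<phi>\<^sub>a u = 1\<^sub>m (rdim B u)" for u
    using mor_adj_carrier_mat[where m = "rdim B" and n = "rdim A", OF \<phi> dims(2,1)]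
      mor_adj_carrier_mat[where m = "rdim A" and n = "rdim B", OF \<phi>' dims(1,2)]
      mor_adj_inverse[where m = "rdim B" and n = "rdim A", OF cj \<phi> \<phi>' \<phi>'\<phi> dims(1)]
      mor_adj_inverse[where m = "rdim A" and n = "rdim B", OF cj \<phi>' \<phi> \<phi>\<phi>' dims(2)]
    by auto
  define \<psi> where "\<psi> u = (if u \<in> S0 then ?\<phi>'\<^sub>a u else \<phi> u)" for u
  define \<psi>\<^sub>a where "\<psi>\<^sub>a u = (if u \<in> S0 then ?\<phi>\<^sub>a u else \<phi>' u)" for u
  have \<psi>_adj: "mor_adj C cj \<psi> = \<psi>\<^sub>a"
    unfolding \<psi>_def[abs_def] \<psi>\<^sub>a_def[abs_def] by (rule mor_adj_glue[OF cj C S0])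
  have \<psi>: "\<psi> u \<in> carrier_mat (rdim B u) (rdim A u)"
    and \<psi>\<^sub>a: "\<psi>\<^sub>a u \<in> carrier_mat (rdim A u) (rdim B u)"
    and \<psi>\<^sub>a\<psi>: "\<psi>\<^sub>a u * \<psi> u = 1\<^sub>m (rdim A u)" and \<psi>\<psi>\<^sub>a: "\<psi> u * \<psi>\<^sub>a u = 1\<^sub>m (rdim B u)" for u
    unfolding \<psi>_def \<psi>\<^sub>a_def using \<phi> \<phi>' \<phi>'\<phi> \<phi>\<phi>' \<phi>\<^sub>a \<phi>'\<^sub>a \<phi>\<^sub>a\<phi>'\<^sub>a \<phi>'\<^sub>a\<phi>\<^sub>a by auto
  let ?T = "twist C S0 B (\<lambda>u. \<phi> u * ?\<phi>\<^sub>a u)"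
  have "ftilde S0 B (\<lambda>u. \<phi> u * ?\<phi>\<^sub>a u) u = \<phi> u * \<psi>\<^sub>a u" for u
    unfolding ftilde_def \<psi>\<^sub>a_def using \<phi>\<phi>' by simp
  then have "rmap ?T \<alpha> = \<psi> (Cod C \<alpha>) * rmap A \<alpha> * \<psi>\<^sub>a (Dom C \<alpha>)" for \<alpha>
    using rmap_twist_conjugate[OF iso selfadjointD(1)[OF A] selfadjointD(1)[OF B]
        \<phi>' \<phi>'\<phi> \<phi>\<phi>' \<psi> \<psi>\<^sub>a \<psi>\<^sub>a\<psi> \<psi>\<psi>\<^sub>a _ in_hom_Dom_Cod] by blast
  moreover have "finite {u. rdim ?T u \<noteq> 0}"
    using is_repD(1)[OF selfadjointD(1)[OF B]] unfolding twist_def by simp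
  ultimately show ?thesis
    using rep_congruent_conjugate[OF cj C A _ _ _ _, of ?T \<psi>] \<psi> \<psi>\<^sub>a\<psi> \<psi>\<psi>\<^sub>a
    unfolding \<psi>_adj by (simp add: twist_def)
qed

theorem lemma4:
  fixes cj :: "'k::division_ring \<Rightarrow> 'k"
    and C :: "('o, 'm, 'k) lcat"
    and A :: "('o, 'm, 'k) rep"
    and S0 :: "'o set"
    and I J :: "('o, 'm, 'k) rep set"
  assumes "skew_involution cj"
    and "lin_cat_inv cj C"
    and "selfadjoint C cj A"
    and "indecomposable C A"
    and "S0_partition C S0"
    and "is_ind0 C cj I J"
  shows "\<exists>B\<in>J. \<exists>f\<in>Aut C B. mor_adj C cj f = f \<and> rep_congruent C cj A (twist C S0 B f)"
proof -
  note cj = assms(1) and C = assms(2) and A = assms(3)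
  obtain g where I: "complete_indec_set C I"
    and J: "J = g ` {X\<in>I. \<exists>S. selfadjoint C cj S \<and> isomorphic C X S}"
    and g: "\<forall>X\<in>I. (\<exists>S. selfadjoint C cj S \<and> isomorphic C X S) \<longrightarrow>
              selfadjoint C cj (g X) \<and> isomorphic C X (g X)"
    using assms(6) unfolding is_ind0_def by blast
  obtain X where X: "X \<in> I" "isomorphic C A X" and X_rep: "is_rep C X"
    using I assms(4) unfolding complete_indec_set_def indecomposable_def by blast
  have "isomorphic C X A"
    using isomorphic_sym[OF X(2) selfadjointD(1)[OF A] X_rep] .
  with A have "\<exists>S. selfadjoint C cj S \<and> isomorphic C X S"
    by blast
  with g J X(1) have B: "selfadjoint C cj (g X)" "isomorphic C X (g X)" and "g X \<in> J"
    by auto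
  obtain \<phi> where \<phi>: "rep_iso C A (g X) \<phi>"
    using isomorphic_trans[OF X(2) B(2) selfadjointD(1)[OF A] X_rep selfadjointD(1)[OF B(1)]]
    unfolding isomorphic_def by blast
  show ?thesis
    using \<open>g X \<in> J\<close> Aut_iso_mult_mor_adj[OF cj C A B(1) \<phi>]
      rep_congruent_twist[OF cj C A B(1) assms(5) \<phi>] by blast
qed

end
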